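(* In the setting described in the context, $\frac{qK^{-1}A-q^{-1}AK^{-1}}{q-q^{-1}}=aI$, $\frac{qBK^{-1}-q^{-1}K^{-1}B}{q-q^{-1}}=bI$, $\frac{qKA^*-q^{-1}A^*K}{q-q^{-1}}=a^*I$, $\frac{qB^*K-q^{-1}KB^*}{q-q^{-1}}=b^*I$.
   Context: $\mathbb K$ is an algebraically closed field, $q\in\mathbb K$ nonzero and not a root of unity, $V$ a nonzero finite-dimensional $\mathbb K$-vector space. A tridiagonal pair on $V$ is an ordered pair $A,A^*$ of linear maps $V\to V$ such that: (i) each of $A,A^*$ is diagonalizable; (ii) there is an ordering $V_0,\dots,V_d$ of the eigenspaces of $A$ with $A^*V_i\subseteq V_{i-1}+V_i+V_{i+1}$ ($V_{-1}=V_{d+1}=0$); (iii) there is an ordering $V^*_0,\dots,V^*_\delta$ of the eigenspaces of $A^*$ with $AV^*_i\subseteq V^*_{i-1}+V^*_i+V^*_{i+1}$ ($V^*_{-1}=V^*_{\delta+1}=0$); (iv) no subspace $W\ne0,V$ satisfies $AW\subseteq W$, $A^*W\subseteq W$. It is known $d=\delta$; orderings as in (ii),(iii) are called standard. Setting: $A,A^*$ is a tridiagonal pair on $V$; $V_0,\dots,V_d$ (resp. $V^*_0,\dots,V^*_d$) is a standard ordering of the eigenspaces of $A$ (resp. $A^*$); the eigenvalue of $A$ on $V_i$ is $aq^{2i-d}$ and that of $A^*$ on $V^*_i$ is $a^*q^{d-2i}$ for some nonzero $a,a^*\in\mathbb K$; $b,b^*\in\mathbb K$ are nonzero. For $0\le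 i\le d$, each of the following three families of subspaces forms a decomposition of $V$ (nonzero subspaces, direct sum equal to $V$): $(V^*_0+\cdots+V^*_i)\cap(V_0+\cdots+V_{d-i})$; $(V^*_{d-i}+\cdots+V^*_d)\cap(V_i+\cdots+V_d)$; $(V^*_0+\cdots+V^*_i)\cap(V_i+\cdots+V_d)$. $B$ is the linear map acting as $bq^{2i-d}I$ on $(V^*_0+\cdots+V^*_i)\cap(V_0+\cdots+V_{d-i})$; $B^*$ acts as $b^*q^{d-2i}I$ on $(V^*_{d-i}+\cdots+V^*_d)\cap(V_i+\cdots+V_d)$; $K$ acts as $q^{2i-d}I$ on $(V^*_0+\cdots+V^*_i)\cap(V_i+\cdots+V_d)$ (for each $0\le i\le d$). *)

theory Defs
  imports "HOL-Computational_Algebra.Polynomial" "HOL-Library.Set_Algebras"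
begin

text \<open>Sums of subspaces are Minkowski sums
  (HOL-Library.Set_Algebras), with 0 = {0}.\<close>

definition eigensp :: "('k \<Rightarrow> 'v \<Rightarrow> 'v) \<Rightarrow> ('v \<Rightarrow> 'v) \<Rightarrow> 'k \<Rightarrow> 'v set" where
  "eigensp scale A \<theta> = {v. A v = scale \<theta> v}"

definition is_eigenspace :: "('k::field \<Rightarrow> 'v::ab_group_add \<Rightarrow> 'v) \<Rightarrow> ('v \<Rightarrow> 'v) \<Rightarrow> 'v set \<Rightarrow> bool" where
  "is_eigenspace scale A W \<longleftrightarrow> (\<exists>\<theta>. W = eigensp scale A \<theta> \<and> W \<noteq> {0})"

definition diagonalizable :: "('k::field \<Rightarrow> 'v::ab_group_add \<Rightarrow> 'v) \<Rightarrow> ('v \<Rightarrow> 'v) \<Rightarrow> bool" where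
  "diagonalizable scale A \<longleftrightarrow>
     module.span scale (\<Union>{W. is_eigenspace scale A W}) = UNIV"

definition ext_sp :: "(nat \<Rightarrow> 'v::zero set) \<Rightarrow> nat \<Rightarrow> int \<Rightarrow> 'v set" where
  "ext_sp Vs d j = (if 0 \<le> j \<and> j \<le> int d then Vs (nat j) else {0})"

definition standard_ordering ::
  "('k::field \<Rightarrow> 'v::ab_group_add \<Rightarrow> 'v) \<Rightarrow> ('v \<Rightarrow> 'v) \<Rightarrow> ('v \<Rightarrow> 'v) \<Rightarrow> (nat \<Rightarrow> 'v set) \<Rightarrow> nat \<Rightarrow> bool" where
  "standard_ordering scale A As Vs d \<longleftrightarrow>
     inj_on Vs {..d} \<and> Vs ` {..d} = {W. is_eigenspace scale A W} \<and>
     (\<forall>i\<le>d. As ` Vs i \<subseteq>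
        ext_sp Vs d (int i - 1) + ext_sp Vs d (int i) + ext_sp Vs d (int i + 1))"

definition tridiagonal_pair :: "('k::field \<Rightarrow> 'v::ab_group_add \<Rightarrow> 'v) \<Rightarrow> ('v \<Rightarrow> 'v) \<Rightarrow> ('v \<Rightarrow> 'v) \<Rightarrow> bool" where
  "tridiagonal_pair scale A As \<longleftrightarrow>
     Vector_Spaces.linear scale scale A \<and> Vector_Spaces.linear scale scale As \<and>
     diagonalizable scale A \<and> diagonalizable scale As \<and>
     (\<exists>Vs d. standard_ordering scale A As Vs d) \<and>
     (\<exists>Vss \<delta>. standard_ordering scale As A Vss \<delta>) \<and>
     (\<forall>W. module.subspace scale W \<and> A ` W \<subseteq> W \<and> As ` W \<subseteq> W \<longrightarrow> W = {0} \<or> W = UNIV)"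

definition is_decomposition :: "('k::field \<Rightarrow> 'v::ab_group_add \<Rightarrow> 'v) \<Rightarrow> (nat \<Rightarrow> 'v set) \<Rightarrow> nat \<Rightarrow> bool" where
  "is_decomposition scale Us d \<longleftrightarrow>
     (\<forall>i\<le>d. module.subspace scale (Us i) \<and> Us i \<noteq> {0}) \<and>
     (\<Sum>i\<le>d. Us i) = UNIV \<and>
     (\<forall>g. (\<forall>i\<le>d. g i \<in> Us i) \<and> (\<Sum>i\<le>d. g i) = 0 \<longrightarrow> (\<forall>i\<le>d. g i = 0))"

end

theory Submission
  imports Defs
begin

text \<open>
  Let \<open>U\<^sub>i\<close>, \<open>W\<^sub>i\<close>, \<open>X\<^sub>i\<close> be the three decompositions, on which \<open>K\<close>, \<open>B\<close>, \<open>B\<^sup>*\<close> act by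
  \<open>q\<^bsup>2i-d\<^esup>\<close>, \<open>b q\<^bsup>2i-d\<^esup>\<close>, \<open>b\<^sup>* q\<^bsup>d-2i\<^esup>\<close>. Everything rests on one computation: if \<open>D\<close> acts
  on the \<open>i\<close>-th piece of a decomposition by \<open>\<delta>\<^sub>i\<close>, \<open>T - \<tau>\<^sub>i\<close> maps the \<open>i\<close>-th piece into
  the \<open>(i+s)\<close>-th one, \<open>q \<delta>\<^bsub>i+s\<^esub> = q\<^sup>-\<^sup>1 \<delta>\<^sub>i\<close> and \<open>\<delta>\<^sub>i \<tau>\<^sub>i = c\<close>, then
  \<open>q D T - q\<^sup>-\<^sup>1 T D = (q - q\<^sup>-\<^sup>1) c\<close>, because the components in the \<open>(i+s)\<close>-th piece cancel.

  Tridiagonality and the eigenvalues give this shifting behaviour of \<open>A\<close> and \<open>A\<^sup>*\<close> on all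
  three decompositions, and the theorem is the computation on the \<open>U\<^sub>i\<close> once \<open>B\<close> and \<open>B\<^sup>*\<close>
  are known to shift the \<open>U\<^sub>i\<close> too. For that, the computation on the \<open>W\<^sub>i\<close> and \<open>X\<^sub>i\<close> gives
  \<open>q A B - q\<^sup>-\<^sup>1 B A = (q - q\<^sup>-\<^sup>1) a b\<close> and three similar relations. For an eigenvector \<open>v\<close>
  of \<open>A\<close> with eigenvalue \<open>\<theta>\<^sub>i\<close> the first one makes \<open>(A - \<theta>\<^bsub>i-1\<^esub>) B v\<close> a multiple of
  \<open>v\<close>, so \<open>B v \<in> V\<^bsub>i-1\<^esub> + V\<^sub>i\<close> with a computable component in \<open>V\<^sub>i\<close>; the other three
  relations locate \<open>B\<close> on \<open>V\<^sup>*\<^sub>i\<close> and \<open>B\<^sup>*\<close> on \<open>V\<^sub>i\<close>, \<open>V\<^sup>*\<^sub>i\<close> in the same way.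
\<close>

section \<open>Sums of subspaces over index ranges\<close>

definition sum_over :: "(nat \<Rightarrow> 'v::comm_monoid_add set) \<Rightarrow> nat \<Rightarrow> int set \<Rightarrow> 'v set" where
  "sum_over E d I = (\<Sum>h \<in> {h. h \<le> d \<and> int h \<in> I}. E h)"

context vector_space
begin

interpretation vector_space_pair scale scale ..

lemma mem_set_sum_iff:
  "finite S \<Longrightarrow> x \<in> sum E S \<longleftrightarrow> (\<exists>g. (\<forall>h\<in>S. g h \<in> E h) \<and> x = sum g S)"
  using set_sum_alt[of S E] by blast

lemma set_sum_subset:
  assumes "finite S" and "subspace P" and "\<And>h. h \<in> S \<Longrightarrow> E h \<subseteq> P"
  shows "sum E S \<subseteq> P"
  using assms by (fastforce simp: mem_set_sum_iff intro!: subspace_sum)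

lemma subspace_set_sum:
  assumes fin: "finite S" and sub: "\<And>h. h \<in> S \<Longrightarrow> subspace (E h)"
  shows "subspace (sum E S)"
proof (rule subspaceI)
  show "0 \<in> sum E S"
    using fin sub subspace_0 by (auto simp: mem_set_sum_iff intro!: exI[of _ "\<lambda>_. 0"])
next
  fix x y assume "x \<in> sum E S" "y \<in> sum E S"
  then obtain g g' where "\<forall>h\<in>S. g h \<in> E h" "x = sum g S" "\<forall>h\<in>S. g' h \<in> E h" "y = sum g' S"
    using fin by (auto simp: mem_set_sum_iff)
  then show "x + y \<in> sum E S"
    using fin sub subspace_add
    by (auto simp: mem_set_sum_iff sum.distrib intro!: exI[of _ "\<lambda>h. g h + g' h"])
next
  fix c x assume "x \<in> sum E S"
  then obtain g where "\<forall>h\<in>S. g h \<in> E h" "x = sum g S"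
    using fin by (auto simp: mem_set_sum_iff)
  then show "scale c x \<in> sum E S"
    using fin sub subspace_scale
    by (auto simp: mem_set_sum_iff scale_sum_right intro!: exI[of _ "\<lambda>h. scale c (g h)"])
qed

lemma set_sum_superset:
  assumes "finite S" and "h \<in> S" and "\<And>h. h \<in> S \<Longrightarrow> 0 \<in> E h"
  shows "E h \<subseteq> sum E S"
proof
  fix x assume "x \<in> E h"
  then show "x \<in> sum E S"
    using assms by (auto simp: mem_set_sum_iff
        intro!: exI[of _ "\<lambda>h'. if h' = h then x else 0"])
qed

lemma subspace_sum_over:
  "(\<And>h. h \<le> d \<Longrightarrow> subspace (E h)) \<Longrightarrow> subspace (sum_over E d I)"
  unfolding sum_over_def by (rule subspace_set_sum) auto

lemma sum_over_subset:
  "subspace P \<Longrightarrow> (\<And>h. h \<le> d \<Longrightarrow> int h \<in> I \<Longrightarrow> E h \<subseteq> P) \<Longrightarrow> sum_over E d I \<subseteq> P"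
  unfolding sum_over_def by (rule set_sum_subset) auto

lemma subset_sum_over:
  "(\<And>h. h \<le> d \<Longrightarrow> subspace (E h)) \<Longrightarrow> h \<le> d \<Longrightarrow> int h \<in> I \<Longrightarrow> E h \<subseteq> sum_over E d I"
  unfolding sum_over_def by (rule set_sum_superset) (auto intro: subspace_0)

lemma sum_over_mono:
  "(\<And>h. h \<le> d \<Longrightarrow> subspace (E h)) \<Longrightarrow> I \<subseteq> J \<Longrightarrow> sum_over E d I \<subseteq> sum_over E d J"
  by (intro sum_over_subset subspace_sum_over subset_sum_over) auto

lemma sum_over_trivial:
  assumes "\<And>h. h \<le> d \<Longrightarrow> int h \<notin> I"
  shows "sum_over E d I = {0}"
proof -
  have "{h. h \<le> d \<and> int h \<in> I} = {}"
    using assms by auto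
  then show ?thesis
    unfolding sum_over_def by (simp only: sum.empty set_zero)
qed

lemma sum_over_map:
  assumes T: "Vector_Spaces.linear scale scale T" and P: "subspace P"
    and step: "\<And>h y. h \<le> d \<Longrightarrow> int h \<in> I \<Longrightarrow> y \<in> E h \<Longrightarrow> T y - scale \<mu> y \<in> P"
    and x: "x \<in> sum_over E d I"
  shows "T x - scale \<mu> x \<in> P"
proof -
  have "Vector_Spaces.linear scale scale (\<lambda>x. T x - scale \<mu> x)"
    by (intro linear_compose_sub T module_hom_scale_self)
  then have "subspace ((\<lambda>x. T x - scale \<mu> x) -` P)"
    using P by (rule linear_subspace_vimage)
  then have "sum_over E d I \<subseteq> (\<lambda>x. T x - scale \<mu> x) -` P"
    by (rule sum_over_subset) (auto intro: step)
  then show ?thesis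
    using x by auto
qed

lemma sum_over_map_diag:
  assumes T: "Vector_Spaces.linear scale scale T" and P: "subspace P"
    and diag: "\<And>h y. h \<le> d \<Longrightarrow> int h \<in> I \<Longrightarrow> y \<in> E h \<Longrightarrow> T y - scale (\<mu> (int h)) y \<in> P"
    and off: "\<And>h. h \<le> d \<Longrightarrow> int h \<in> I - {m} \<Longrightarrow> E h \<subseteq> P"
    and x: "x \<in> sum_over E d I"
  shows "T x - scale (\<mu> m) x \<in> P"
proof (rule sum_over_map[OF T P _ x])
  fix h y assume h: "h \<le> d" "int h \<in> I" and y: "y \<in> E h"
  have "scale (\<mu> (int h) - \<mu> m) y \<in> P"
  proof (cases "int h = m")
    case True
    then show ?thesis using subspace_0[OF P] by simp
  next
    case False
    then show ?thesis using off h y by (intro subspace_scale[OF P]) auto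
  qed
  with diag[OF h y] have "(T y - scale (\<mu> (int h)) y) + scale (\<mu> (int h) - \<mu> m) y \<in> P"
    by (rule subspace_add[OF P])
  then show "T y - scale (\<mu> m) y \<in> P"
    by (simp add: scale_left_diff_distrib)
qed

lemma sum_over_tridiagonal:
  assumes T: "Vector_Spaces.linear scale scale T" and sub: "\<And>h. h \<le> d \<Longrightarrow> subspace (E h)"
    and tri: "\<forall>i\<le>d. T ` E i \<subseteq> ext_sp E d (int i - 1) + ext_sp E d (int i) + ext_sp E d (int i + 1)"
    and J: "\<And>i. i \<in> I \<Longrightarrow> {i - 1..i + 1} \<subseteq> J"
    and x: "x \<in> sum_over E d I"
  shows "T x - scale \<mu> x \<in> sum_over E d J"
proof (rule sum_over_map[OF T subspace_sum_over[OF sub] _ x])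
  fix h y assume h: "h \<le> d" "int h \<in> I" and y: "y \<in> E h"
  have ext: "ext_sp E d j \<subseteq> sum_over E d J" if "j \<in> J" for j
  proof (cases "0 \<le> j \<and> j \<le> int d")
    case True
    then show ?thesis
      using that subset_sum_over[of d E "nat j" J, OF sub] by (simp add: ext_sp_def nat_le_iff)
  next
    case False
    then show ?thesis
      using subspace_0[OF subspace_sum_over[of d E, OF sub]] by (auto simp: ext_sp_def)
  qed
  have J3: "int h - 1 \<in> J" "int h \<in> J" "int h + 1 \<in> J"
    using J[OF h(2)] by auto
  have "ext_sp E d (int h - 1) + ext_sp E d (int h) + ext_sp E d (int h + 1) \<subseteq> sum_over E d J"
    using ext[OF J3(1)] ext[OF J3(2)] ext[OF J3(3)]
      subspace_add[OF subspace_sum_over[of d E, OF sub]]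
    by (fastforce elim!: set_plus_elim)
  then have "T y \<in> sum_over E d J"
    using tri h y by blast
  moreover have "y \<in> sum_over E d J"
    using subset_sum_over[of d E h J, OF sub h(1) J3(2)] y by auto
  ultimately show "T y - scale \<mu> y \<in> sum_over E d J"
    by (intro subspace_diff subspace_scale subspace_sum_over sub)
qed

section \<open>Eigenspaces\<close>

lemma subspace_eigensp: "Vector_Spaces.linear scale scale T \<Longrightarrow> subspace (eigensp scale T \<theta>)"
  by (rule subspaceI)
    (auto simp: eigensp_def linear_add linear_scale linear_0 scale_right_distrib scale_left_commute)

lemma sum_over_eigen:
  assumes T: "Vector_Spaces.linear scale scale T"
    and eig: "\<And>h. h \<le> d \<Longrightarrow> E h = eigensp scale T (\<theta> (int h))"
    and x: "x \<in> sum_over E d I"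
  shows "T x - scale (\<theta> m) x \<in> sum_over E d (I - {m})"
proof -
  have sub: "\<And>h. h \<le> d \<Longrightarrow> subspace (E h)"
    using eig subspace_eigensp[OF T] by simp
  show ?thesis
  proof (rule sum_over_map_diag[OF T subspace_sum_over[OF sub] _ _ x])
    show "T y - scale (\<theta> (int h)) y \<in> sum_over E d (I - {m})" if "h \<le> d" "y \<in> E h" for h y
      using that eig subspace_0[OF subspace_sum_over[OF sub]] by (simp add: eigensp_def)
    show "E h \<subseteq> sum_over E d (I - {m})" if "h \<le> d" "int h \<in> I - {m}" for h
      using that by (intro subset_sum_over[OF sub]) auto
  qed
qed

lemma eigensp_sum_eq_0:
  assumes T: "Vector_Spaces.linear scale scale T" and fin: "finite S"
  shows "inj_on \<theta> S \<Longrightarrow> \<forall>h\<in>S. g h \<in> eigensp scale T (\<theta> h) \<Longrightarrow> sum g S = 0 \<Longrightarrow> \<forall>h\<in>S. g h = 0"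
  using fin
proof (induction S arbitrary: g rule: finite_induct)
  case empty
  then show ?case by simp
next
  case (insert k S)
  have inj: "inj_on \<theta> S" and \<theta>_ne: "\<forall>h\<in>S. \<theta> h \<noteq> \<theta> k"
    using insert.prems(1) insert.hyps(2) by (auto simp: inj_on_def)
  have sum0: "g k + sum g S = 0"
    using insert.prems insert.hyps by simp
  \<comment> \<open>applying \<open>T - \<theta> k\<close> kills the \<open>k\<close>-component and rescales the others\<close>
  have "(\<Sum>h\<in>S. scale (\<theta> h - \<theta> k) (g h)) = T (g k + sum g S) - scale (\<theta> k) (g k + sum g S)"
    using insert.prems(2)
    by (simp add: linear_add[OF T] linear_sum[OF T] eigensp_def scale_right_distrib scale_sum_right
        scale_left_diff_distrib sum_subtractf)
  also have "\<dots> = 0"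
    using sum0 by (simp add: linear_0[OF T])
  finally have "\<forall>h\<in>S. scale (\<theta> h - \<theta> k) (g h) = 0"
    using insert.prems(2) subspace_scale[OF subspace_eigensp[OF T]]
    by (intro insert.IH[OF inj]) auto
  then have gS: "\<forall>h\<in>S. g h = 0"
    using \<theta>_ne by auto
  then have "g k = 0"
    using sum0 by simp
  with gS show ?case by simp
qed

lemma eigenvector_adjacent:
  assumes T: "Vector_Spaces.linear scale scale T"
    and eig: "\<And>h. h \<le> d \<Longrightarrow> E h = eigensp scale T (\<theta> (int h))" and inj: "inj \<theta>"
    and span: "sum E {..d} = UNIV" and j: "j \<le> d" and v: "v \<in> E j" and jk: "int j \<noteq> k"
    and y: "T y - scale (\<theta> k) y = scale \<gamma> v"
  shows "y - scale (\<gamma> / (\<theta> (int j) - \<theta> k)) v \<in> sum_over E d {k}"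
proof -
  have sub: "\<And>h. h \<le> d \<Longrightarrow> subspace (E h)"
    using eig subspace_eigensp[OF T] by simp
  obtain g where g: "\<forall>h\<in>{..d}. g h \<in> E h" and y_sum: "y = sum g {..d}"
    using span mem_set_sum_iff[of "{..d}" y E] by auto
  have "T y = (\<Sum>h\<le>d. scale (\<theta> (int h)) (g h))"
    unfolding y_sum linear_sum[OF T] using g eig by (intro sum.cong) (auto simp: eigensp_def)
  then have Ty: "T y - scale (\<theta> k) y = (\<Sum>h\<le>d. scale (\<theta> (int h) - \<theta> k) (g h))"
    by (simp add: y_sum scale_sum_right scale_left_diff_distrib sum_subtractf)
  \<comment> \<open>the eigencomponents of \<open>(T - \<theta> k) y - \<gamma> v\<close> all vanish\<close>
  define g' where "g' h = scale (\<theta> (int h) - \<theta> k) (g h) - (if h = j then scale \<gamma> v else 0)" for h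
  have "g' h \<in> eigensp scale T (\<theta> (int h))" if "h \<le> d" for h
    using that g v eig[OF that] sub[OF that]
    by (auto simp: g'_def intro!: subspace_diff subspace_scale subspace_0)
  moreover have "sum g' {..d} = 0"
    using y j by (simp add: g'_def sum_subtractf Ty[symmetric])
  ultimately have g'0: "\<forall>h\<in>{..d}. g' h = 0"
    by (intro eigensp_sum_eq_0[OF T finite_atMost]) (auto simp: inj_on_def inj_eq[OF inj])
  have gj_scaled: "scale (\<theta> (int j) - \<theta> k) (g j) = scale \<gamma> v"
    using g'0 j by (simp add: g'_def)
  have "\<theta> (int j) - \<theta> k \<noteq> 0"
    using jk by (simp add: inj_eq[OF inj])
  then have "g j = scale (inverse (\<theta> (int j) - \<theta> k)) (scale (\<theta> (int j) - \<theta> k) (g j))"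
    by simp
  also have "\<dots> = scale (\<gamma> / (\<theta> (int j) - \<theta> k)) v"
    unfolding gj_scaled by (simp add: divide_inverse_commute)
  finally have gj: "g j = scale (\<gamma> / (\<theta> (int j) - \<theta> k)) v" .
  have "y - g j = sum g ({..d} - {j})"
    using j by (simp add: y_sum sum_diff1)
  also have "\<dots> = sum g {h. h \<le> d \<and> int h \<in> {k}}"
  proof (rule sum.mono_neutral_right)
    show "\<forall>h\<in>{..d} - {j} - {h. h \<le> d \<and> int h \<in> {k}}. g h = 0"
    proof
      fix h assume h: "h \<in> {..d} - {j} - {h. h \<le> d \<and> int h \<in> {k}}"
      then have "scale (\<theta> (int h) - \<theta> k) (g h) = 0"
        using g'0 by (simp add: g'_def)
      moreover have "\<theta> (int h) - \<theta> k \<noteq> 0"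
        using h by (simp add: inj_eq[OF inj])
      ultimately show "g h = 0"
        by simp
    qed
  qed (use jk in auto)
  also have "\<dots> \<in> sum_over E d {k}"
    unfolding sum_over_def using g by (auto simp: mem_set_sum_iff)
  finally show ?thesis
    using gj by simp
qed

lemma set_sum_eigenspaces_eq_UNIV:
  assumes A: "Vector_Spaces.linear scale scale A" and diag: "diagonalizable scale A"
    and std: "standard_ordering scale A As Vs d"
  shows "sum Vs {..d} = UNIV"
proof -
  have eigenspaces: "Vs ` {..d} = {W. is_eigenspace scale A W}"
    using std by (simp add: standard_ordering_def)
  have sub: "subspace (Vs h)" if "h \<le> d" for h
  proof -
    have "is_eigenspace scale A (Vs h)"
      using eigenspaces that by blast
    then show ?thesis
      using subspace_eigensp[OF A] by (auto simp: is_eigenspace_def)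
  qed
  have "(\<Union>h\<le>d. Vs h) \<subseteq> sum Vs {..d}"
    using sub by (intro UN_least set_sum_superset) (auto intro: subspace_0)
  then have "span (\<Union>h\<le>d. Vs h) \<subseteq> sum Vs {..d}"
    using sub by (intro span_minimal subspace_set_sum) auto
  moreover have "span (\<Union>h\<le>d. Vs h) = UNIV"
    using diag eigenspaces by (simp add: diagonalizable_def)
  ultimately show ?thesis
    by auto
qed

section \<open>Maps acting diagonally on a decomposition\<close>

lemma linear_eq_on_decomposition:
  assumes dec: "is_decomposition scale U d"
    and f: "Vector_Spaces.linear scale scale f" and g: "Vector_Spaces.linear scale scale g"
    and eq: "\<And>i u. i \<le> d \<Longrightarrow> u \<in> U i \<Longrightarrow> f u = g u"
  shows "f = g"
proof
  fix x
  have "x \<in> sum U {..d}"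
    using dec by (simp add: is_decomposition_def)
  then obtain s where "\<forall>i\<in>{..d}. s i \<in> U i" "x = sum s {..d}"
    by (auto simp: mem_set_sum_iff)
  then show "f x = g x"
    using eq by (simp add: linear_sum[OF f] linear_sum[OF g])
qed

lemma bij_if_scalar_on_decomposition:
  assumes dec: "is_decomposition scale U d" and K: "Vector_Spaces.linear scale scale K"
    and K_U: "\<And>i u. i \<le> d \<Longrightarrow> u \<in> U i \<Longrightarrow> K u = scale (\<kappa> i) u"
    and \<kappa>: "\<And>i. i \<le> d \<Longrightarrow> \<kappa> i \<noteq> 0"
  shows "bij K"
proof (rule bijI)
  have components: "\<exists>s. (\<forall>i\<in>{..d}. s i \<in> U i) \<and> x = sum s {..d}" for x
  proof -
    have "x \<in> sum U {..d}"
      using dec by (simp add: is_decomposition_def)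
    then show ?thesis
      by (simp add: mem_set_sum_iff)
  qed
  show "inj K"
    unfolding linear_inj_iff_eq_0[OF K]
  proof (intro allI impI)
    fix x assume "K x = 0"
    obtain s where s: "\<forall>i\<in>{..d}. s i \<in> U i" "x = sum s {..d}"
      using components by blast
    have "K x = (\<Sum>i\<le>d. scale (\<kappa> i) (s i))"
      unfolding s(2) linear_sum[OF K] using s(1) K_U by (intro sum.cong) auto
    with \<open>K x = 0\<close> have sum0: "(\<Sum>i\<le>d. scale (\<kappa> i) (s i)) = 0"
      by simp
    have mem: "\<forall>i\<le>d. scale (\<kappa> i) (s i) \<in> U i"
      using dec s by (simp add: is_decomposition_def subspace_scale)
    have indep: "\<And>g. \<forall>i\<le>d. g i \<in> U i \<Longrightarrow> sum g {..d} = 0 \<Longrightarrow> \<forall>i\<le>d. g i = 0"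
      using dec by (simp add: is_decomposition_def)
    have "\<forall>i\<le>d. scale (\<kappa> i) (s i) = 0"
      using indep[of "\<lambda>i. scale (\<kappa> i) (s i)"] mem sum0 by simp
    then show "x = 0"
      using \<kappa> s by simp
  qed
  show "surj K"
  proof
    show "UNIV \<subseteq> range K"
    proof
      fix y
      obtain s where s: "\<forall>i\<in>{..d}. s i \<in> U i" "y = sum s {..d}"
        using components by blast
      have "K (scale (inverse (\<kappa> i)) (s i)) = s i" if "i \<le> d" for i
      proof -
        have "scale (inverse (\<kappa> i)) (s i) \<in> U i"
          using dec s that by (simp add: is_decomposition_def subspace_scale)
        then show ?thesis
          using K_U \<kappa> that by simp
      qed
      then have "K (\<Sum>i\<le>d. scale (inverse (\<kappa> i)) (s i)) = y"
        using s by (simp add: linear_sum[OF K])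
      then show "y \<in> range K"
        by (metis rangeI)
    qed
  qed simp
qed

lemma qcommutator_diag_shift:
  assumes dec: "is_decomposition scale (\<lambda>i. U (int i)) d"
    and D: "Vector_Spaces.linear scale scale D" and T: "Vector_Spaces.linear scale scale T"
    and D_U: "\<And>m u. u \<in> U m \<Longrightarrow> D u = scale (\<delta> m) u"
    and T_U: "\<And>m u. u \<in> U m \<Longrightarrow> T u - scale (\<tau> m) u \<in> U (m + s)"
    and shift: "\<And>m. \<alpha> * \<delta> (m + s) = \<beta> * \<delta> m"
    and c: "\<And>m. \<delta> m * \<tau> m = c"
  shows "scale \<alpha> (D (T v)) - scale \<beta> (T (D v)) = scale ((\<alpha> - \<beta>) * c) v"
proof -
  have "(\<lambda>v. scale \<alpha> (D (T v)) - scale \<beta> (T (D v))) = (\<lambda>v. scale ((\<alpha> - \<beta>) * c) v)"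
  proof (rule linear_eq_on_decomposition[OF dec])
    show "Vector_Spaces.linear scale scale (\<lambda>v. scale \<alpha> (D (T v)) - scale \<beta> (T (D v)))"
      using Vector_Spaces.linear_compose[OF T D] Vector_Spaces.linear_compose[OF D T]
      by (intro linear_compose_sub linear_compose_scale_right) (simp_all add: o_def)
    fix i u assume u: "u \<in> U (int i)"
    define r where "r = T u - scale (\<tau> (int i)) u"
    have r: "D r = scale (\<delta> (int i + s)) r"
      using D_U T_U[OF u] by (simp add: r_def)
    have Tu: "T u = scale (\<tau> (int i)) u + r"
      by (simp add: r_def)
    have DTu: "D (T u) = scale (\<delta> (int i) * \<tau> (int i)) u + scale (\<delta> (int i + s)) r"
      unfolding Tu by (simp add: linear_add[OF D] linear_scale[OF D] D_U[OF u] r mult.commute)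
    have TDu: "T (D u) = scale (\<delta> (int i) * \<tau> (int i)) u + scale (\<delta> (int i)) r"
      unfolding D_U[OF u] linear_scale[OF T] Tu by (simp add: scale_right_distrib)
    have "scale \<alpha> (D (T u)) - scale \<beta> (T (D u))
        = (scale (\<alpha> * (\<delta> (int i) * \<tau> (int i))) u - scale (\<beta> * (\<delta> (int i) * \<tau> (int i))) u)
          + (scale (\<alpha> * \<delta> (int i + s)) r - scale (\<beta> * \<delta> (int i)) r)"
      unfolding DTu TDu scale_right_distrib scale_scale by (rule add_diff_add)
    also have "\<dots> = scale ((\<alpha> - \<beta>) * c) u"
      by (simp add: shift c scale_left_diff_distrib[symmetric] left_diff_distrib[symmetric])
    finally show "scale \<alpha> (D (T u)) - scale \<beta> (T (D u)) = scale ((\<alpha> - \<beta>) * c) u" .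
  qed (rule module_hom_scale_self)
  then show ?thesis
    by (rule fun_cong)
qed

lemma qcommutator_shift_diag:
  assumes dec: "is_decomposition scale (\<lambda>i. U (int i)) d"
    and D: "Vector_Spaces.linear scale scale D" and T: "Vector_Spaces.linear scale scale T"
    and D_U: "\<And>m u. u \<in> U m \<Longrightarrow> D u = scale (\<delta> m) u"
    and T_U: "\<And>m u. u \<in> U m \<Longrightarrow> T u - scale (\<tau> m) u \<in> U (m + s)"
    and shift: "\<And>m. \<beta> * \<delta> (m + s) = \<alpha> * \<delta> m"
    and c: "\<And>m. \<delta> m * \<tau> m = c"
  shows "scale \<alpha> (T (D v)) - scale \<beta> (D (T v)) = scale ((\<alpha> - \<beta>) * c) v"
proof -
  have "scale \<beta> (D (T v)) - scale \<alpha> (T (D v)) = scale ((\<beta> - \<alpha>) * c) v"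
    by (rule qcommutator_diag_shift[where \<alpha> = \<beta> and \<beta> = \<alpha>, OF dec D T D_U T_U shift c])
  then have "- (scale \<beta> (D (T v)) - scale \<alpha> (T (D v))) = scale ((\<alpha> - \<beta>) * c) v"
    by (simp only: scale_minus_left[symmetric] mult_minus_left[symmetric] minus_diff_eq)
  then show ?thesis
    by simp
qed

end

lemma power_int_inj_not_root_of_unity:
  fixes q :: "'k::field"
  assumes "q \<noteq> 0" and "\<forall>n::nat. n > 0 \<longrightarrow> q ^ n \<noteq> 1" and "q powi m = q powi n"
  shows "m = n"
proof (rule ccontr)
  assume "m \<noteq> n"
  have "q powi (m - n) = 1" and "q powi (n - m) = 1"
    using assms(1,3) by (simp_all add: power_int_diff)
  then have "q powi \<bar>m - n\<bar> = 1"
    by (simp add: abs_if)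
  then have "q ^ nat \<bar>m - n\<bar> = 1"
    by (simp add: power_int_def)
  with assms(2) \<open>m \<noteq> n\<close> show False
    by simp
qed

lemma is_decomposition_cong:
  assumes "is_decomposition scale U' d" and "\<And>i. i \<le> d \<Longrightarrow> U i = U' i"
  shows "is_decomposition scale U d"
proof -
  have "sum U {..d} = sum U' {..d}"
    using assms(2) by (intro sum.cong) auto
  then show ?thesis
    using assms unfolding is_decomposition_def by simp
qed

lemma sum_atMost_eq_sum_over:
  "i \<le> d \<Longrightarrow> (\<Sum>h\<le>i. E h) = sum_over E d {..int i}"
  unfolding sum_over_def by (rule arg_cong[where f = "sum E"]) auto

lemma sum_atLeastAtMost_eq_sum_over:
  "i \<le> d \<Longrightarrow> (\<Sum>h\<in>{i..d}. E h) = sum_over E d {int i..}"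
  unfolding sum_over_def by (rule arg_cong[where f = "sum E"]) auto

locale q_geometric_tdp = vector_space scale
  for scale :: "'k::field \<Rightarrow> 'v::ab_group_add \<Rightarrow> 'v" +
  fixes A As B Bs K :: "'v \<Rightarrow> 'v" and Vs Vss :: "nat \<Rightarrow> 'v set" and d :: nat
    and q a ast b bs :: 'k
  assumes q_nz: "q \<noteq> 0" and q_nonroot: "\<forall>n::nat. n > 0 \<longrightarrow> q ^ n \<noteq> 1"
    and a_nz: "a \<noteq> 0" and ast_nz: "ast \<noteq> 0"
    and linA: "Vector_Spaces.linear scale scale A"
    and linAs: "Vector_Spaces.linear scale scale As"
    and diagA: "diagonalizable scale A" and diagAs: "diagonalizable scale As"
    and std: "standard_ordering scale A As Vs d"
    and stds: "standard_ordering scale As A Vss d"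
    and eigA: "\<forall>i\<le>d. Vs i = eigensp scale A (a * q powi (2 * int i - int d))"
    and eigAs: "\<forall>i\<le>d. Vss i = eigensp scale As (ast * q powi (int d - 2 * int i))"
    and dec1: "is_decomposition scale
                 (\<lambda>i. (\<Sum>h\<le>i. Vss h) \<inter> (\<Sum>h\<le>d - i. Vs h)) d"
    and dec2: "is_decomposition scale
                 (\<lambda>i. (\<Sum>h\<in>{d - i..d}. Vss h) \<inter> (\<Sum>h\<in>{i..d}. Vs h)) d"
    and dec3: "is_decomposition scale
                 (\<lambda>i. (\<Sum>h\<le>i. Vss h) \<inter> (\<Sum>h\<in>{i..d}. Vs h)) d"
    and linB: "Vector_Spaces.linear scale scale B"
    and B_def: "\<forall>i\<le>d. \<forall>v \<in> (\<Sum>h\<le>i. Vss h) \<inter> (\<Sum>h\<le>d - i. Vs h).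
                   B v = scale (b * q powi (2 * int i - int d)) v"
    and linBs: "Vector_Spaces.linear scale scale Bs"
    and Bs_def: "\<forall>i\<le>d. \<forall>v \<in> (\<Sum>h\<in>{d - i..d}. Vss h) \<inter> (\<Sum>h\<in>{i..d}. Vs h).
                   Bs v = scale (bs * q powi (int d - 2 * int i)) v"
    and linK: "Vector_Spaces.linear scale scale K"
    and K_def: "\<forall>i\<le>d. \<forall>v \<in> (\<Sum>h\<le>i. Vss h) \<inter> (\<Sum>h\<in>{i..d}. Vs h).
                   K v = scale (q powi (2 * int i - int d)) v"
begin

interpretation vector_space_pair scale scale ..

definition kappa :: "int \<Rightarrow> 'k" where
  "kappa m = q powi (2 * m - int d)"

definition theta :: "int \<Rightarrow> 'k" where
  "theta m = a * kappa m"

definition dual_theta :: "int \<Rightarrow> 'k" where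
  "dual_theta m = ast * inverse (kappa m)"

lemma kappa_nonzero [simp]: "kappa m \<noteq> 0"
  using q_nz by (simp add: kappa_def)

lemma kappa_succ: "kappa (m + 1) = q\<^sup>2 * kappa m"
proof -
  have "kappa (m + 1) = q powi ((2 * m - int d) + 2)"
    unfolding kappa_def by (rule arg_cong[where f = "power_int q"]) simp
  then show ?thesis
    using q_nz by (simp add: kappa_def power_int_add mult.commute)
qed

lemma kappa_pred: "kappa (m - 1) = kappa m / q\<^sup>2"
  using kappa_succ[of "m - 1"] q_nz by simp

lemma theta_succ: "theta (m + 1) = q * (q * theta m)"
  by (simp add: theta_def kappa_succ power2_eq_square)

lemma theta_pred: "theta (m - 1) = inverse q * (inverse q * theta m)"
  by (simp add: theta_def kappa_pred power2_eq_square field_simps)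

lemma dual_theta_succ: "dual_theta (m + 1) = inverse q * (inverse q * dual_theta m)"
  by (simp add: dual_theta_def kappa_succ power2_eq_square inverse_mult_distrib mult_ac)

lemma dual_theta_pred: "dual_theta (m - 1) = q * (q * dual_theta m)"
  using q_nz by (simp add: dual_theta_def kappa_pred power2_eq_square field_simps)

lemma kappa_reflect: "kappa (int d - m) = inverse (kappa m)"
proof -
  have "2 * (int d - m) - int d = - (2 * m - int d)"
    by simp
  then show ?thesis
    unfolding kappa_def by (simp only: power_int_minus)
qed

lemma inj_kappa: "inj kappa"
proof (rule injI)
  fix m n assume "kappa m = kappa n"
  then have "2 * m - int d = 2 * n - int d"
    unfolding kappa_def by (rule power_int_inj_not_root_of_unity[OF q_nz q_nonroot])
  then show "m = n"
    by simp
qed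

lemma inj_theta: "inj theta"
  using inj_kappa a_nz by (auto intro!: injI simp: theta_def dest: injD)

lemma inj_dual_theta: "inj dual_theta"
  using inj_kappa ast_nz by (auto intro!: injI simp: dual_theta_def dest: injD)

lemma q_square_ne_1: "q\<^sup>2 \<noteq> 1"
  using q_nonroot by auto

lemma one_minus_q_square_nonzero: "1 - q\<^sup>2 \<noteq> 0"
  using q_square_ne_1 by simp

lemma q_minus_inverse_nonzero: "q - inverse q \<noteq> 0"
proof
  assume "q - inverse q = 0"
  then have "q\<^sup>2 = 1"
    using q_nz by (simp add: field_simps power2_eq_square)
  with q_square_ne_1 show False ..
qed

lemma Vs_eigensp: "h \<le> d \<Longrightarrow> Vs h = eigensp scale A (theta (int h))"
  using eigA by (simp add: theta_def kappa_def)

lemma Vss_eigensp: "h \<le> d \<Longrightarrow> Vss h = eigensp scale As (dual_theta (int h))"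
  using eigAs kappa_reflect[of "int h"] by (simp add: dual_theta_def kappa_def)

lemma subspace_Vs: "h \<le> d \<Longrightarrow> subspace (Vs h)"
  using subspace_eigensp[OF linA] by (simp add: Vs_eigensp)

lemma subspace_Vss: "h \<le> d \<Longrightarrow> subspace (Vss h)"
  using subspace_eigensp[OF linAs] by (simp add: Vss_eigensp)

lemma set_sum_Vs: "sum Vs {..d} = UNIV"
  by (rule set_sum_eigenspaces_eq_UNIV[OF linA diagA std])

lemma set_sum_Vss: "sum Vss {..d} = UNIV"
  by (rule set_sum_eigenspaces_eq_UNIV[OF linAs diagAs stds])

lemma tridiagonal_A:
  "\<forall>i\<le>d. A ` Vss i \<subseteq> ext_sp Vss d (int i - 1) + ext_sp Vss d (int i) + ext_sp Vss d (int i + 1)"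
  using stds by (simp add: standard_ordering_def)

lemma tridiagonal_As:
  "\<forall>i\<le>d. As ` Vs i \<subseteq> ext_sp Vs d (int i - 1) + ext_sp Vs d (int i) + ext_sp Vs d (int i + 1)"
  using std by (simp add: standard_ordering_def)

lemmas subspace_sum_over_Vs = subspace_sum_over[of d Vs, OF subspace_Vs]
lemmas subspace_sum_over_Vss = subspace_sum_over[of d Vss, OF subspace_Vss]
lemmas tridiagonal_sum_over_Vs = sum_over_tridiagonal[OF linAs subspace_Vs tridiagonal_As]
lemmas tridiagonal_sum_over_Vss = sum_over_tridiagonal[OF linA subspace_Vss tridiagonal_A]
lemmas eigen_sum_over_Vs = sum_over_eigen[where \<theta> = theta, OF linA Vs_eigensp]
lemmas eigen_sum_over_Vss = sum_over_eigen[where \<theta> = dual_theta, OF linAs Vss_eigensp]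

text \<open>The split decomposition and the two decompositions on which \<open>B\<close> and \<open>B\<^sup>*\<close> are
  diagonal, indexed by all integers (they are zero outside \<open>0..d\<close>).\<close>

definition U :: "int \<Rightarrow> 'v set" where
  "U m = sum_over Vss d {..m} \<inter> sum_over Vs d {m..}"

definition W :: "int \<Rightarrow> 'v set" where
  "W m = sum_over Vss d {..m} \<inter> sum_over Vs d {..int d - m}"

definition X :: "int \<Rightarrow> 'v set" where
  "X m = sum_over Vss d {int d - m..} \<inter> sum_over Vs d {m..}"

lemma subspace_U: "subspace (U m)"
  unfolding U_def by (intro subspace_inter subspace_sum_over_Vs subspace_sum_over_Vss)

lemma U_out_of_range: "u \<in> U m \<Longrightarrow> m < 0 \<or> int d < m \<Longrightarrow> u = 0"
  using sum_over_trivial[of d "{..m}" Vss] sum_over_trivial[of d "{m..}" Vs] by (auto simp: U_def)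

lemma W_out_of_range: "u \<in> W m \<Longrightarrow> m < 0 \<or> int d < m \<Longrightarrow> u = 0"
  using sum_over_trivial[of d "{..m}" Vss] sum_over_trivial[of d "{..int d - m}" Vs]
  by (auto simp: W_def)

lemma X_out_of_range: "u \<in> X m \<Longrightarrow> m < 0 \<or> int d < m \<Longrightarrow> u = 0"
  using sum_over_trivial[of d "{int d - m..}" Vss] sum_over_trivial[of d "{m..}" Vs]
  by (auto simp: X_def)

lemma U_eq: "i \<le> d \<Longrightarrow> U (int i) = (\<Sum>h\<le>i. Vss h) \<inter> (\<Sum>h\<in>{i..d}. Vs h)"
  by (simp add: U_def sum_atMost_eq_sum_over sum_atLeastAtMost_eq_sum_over)

lemma W_eq: "i \<le> d \<Longrightarrow> W (int i) = (\<Sum>h\<le>i. Vss h) \<inter> (\<Sum>h\<le>d - i. Vs h)"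
  using sum_atMost_eq_sum_over[of "d - i" d Vs] by (simp add: W_def sum_atMost_eq_sum_over)

lemma X_eq: "i \<le> d \<Longrightarrow> X (int i) = (\<Sum>h\<in>{d - i..d}. Vss h) \<inter> (\<Sum>h\<in>{i..d}. Vs h)"
  using sum_atLeastAtMost_eq_sum_over[of "d - i" d Vss]
  by (simp add: X_def sum_atLeastAtMost_eq_sum_over)

lemma decomposition_U: "is_decomposition scale (\<lambda>i. U (int i)) d"
  using dec3 by (rule is_decomposition_cong) (simp add: U_eq)

lemma decomposition_W: "is_decomposition scale (\<lambda>i. W (int i)) d"
  using dec1 by (rule is_decomposition_cong) (simp add: W_eq)

lemma decomposition_X: "is_decomposition scale (\<lambda>i. X (int i)) d"
  using dec2 by (rule is_decomposition_cong) (simp add: X_eq)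

lemma int_cases_range:
  obtains (range) i where "m = int i" "i \<le> d" | (below) "m < 0" | (above) "int d < m"
  by (metis linorder_not_le nonneg_int_cases of_nat_le_iff)

lemma K_U: assumes u: "u \<in> U m" shows "K u = scale (kappa m) u"
proof (cases m rule: int_cases_range)
  case (range i)
  then show ?thesis
    using K_def u U_eq by (simp add: kappa_def)
qed (use U_out_of_range[OF u] linear_0[OF linK] in simp_all)

lemma B_W: assumes u: "u \<in> W m" shows "B u = scale (b * kappa m) u"
proof (cases m rule: int_cases_range)
  case (range i)
  then show ?thesis
    using B_def u W_eq by (simp add: kappa_def)
qed (use W_out_of_range[OF u] linear_0[OF linB] in simp_all)

lemma Bs_X: assumes u: "u \<in> X m" shows "Bs u = scale (bs * inverse (kappa m)) u"
proof (cases m rule: int_cases_range)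
  case (range i)
  then show ?thesis
    using Bs_def u X_eq kappa_reflect[of m] by (simp add: kappa_def)
qed (use X_out_of_range[OF u] linear_0[OF linBs] in simp_all)

lemma A_U: assumes u: "u \<in> U m" shows "A u - scale (theta m) u \<in> U (m + 1)"
proof -
  have "A u - scale (theta m) u \<in> sum_over Vss d {..m + 1}"
    using u unfolding U_def by (intro tridiagonal_sum_over_Vss[where I = "{..m}"]) auto
  moreover have "A u - scale (theta m) u \<in> sum_over Vs d ({m..} - {m})"
    using u unfolding U_def by (intro eigen_sum_over_Vs) auto
  moreover have "{m..} - {m} = {m + 1..}"
    by auto
  ultimately show ?thesis
    by (simp add: U_def)
qed

lemma As_U: assumes u: "u \<in> U m" shows "As u - scale (dual_theta m) u \<in> U (m - 1)"
proof -
  have "As u - scale (dual_theta m) u \<in> sum_over Vss d ({..m} - {m})"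
    using u unfolding U_def by (intro eigen_sum_over_Vss) auto
  moreover have "As u - scale (dual_theta m) u \<in> sum_over Vs d {m - 1..}"
    using u unfolding U_def by (intro tridiagonal_sum_over_Vs[where I = "{m..}"]) auto
  moreover have "{..m} - {m} = {..m - 1}"
    by auto
  ultimately show ?thesis
    by (simp add: U_def)
qed

lemma A_W: assumes u: "u \<in> W m" shows "A u - scale (a * inverse (kappa m)) u \<in> W (m + 1)"
proof -
  have "A u - scale (a * inverse (kappa m)) u \<in> sum_over Vss d {..m + 1}"
    using u unfolding W_def by (intro tridiagonal_sum_over_Vss[where I = "{..m}"]) auto
  moreover have "A u - scale (theta (int d - m)) u \<in> sum_over Vs d ({..int d - m} - {int d - m})"
    using u unfolding W_def by (intro eigen_sum_over_Vs) auto
  moreover have "{..int d - m} - {int d - m} = {..int d - (m + 1)}"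
    by auto
  ultimately show ?thesis
    by (simp add: W_def theta_def kappa_reflect)
qed

lemma As_W: assumes u: "u \<in> W m" shows "As u - scale (dual_theta m) u \<in> W (m - 1)"
proof -
  have "As u - scale (dual_theta m) u \<in> sum_over Vss d ({..m} - {m})"
    using u unfolding W_def by (intro eigen_sum_over_Vss) auto
  moreover have "As u - scale (dual_theta m) u \<in> sum_over Vs d {..int d - (m - 1)}"
    using u unfolding W_def by (intro tridiagonal_sum_over_Vs[where I = "{..int d - m}"]) auto
  moreover have "{..m} - {m} = {..m - 1}"
    by auto
  ultimately show ?thesis
    by (simp add: W_def)
qed

lemma A_X: assumes u: "u \<in> X m" shows "A u - scale (theta m) u \<in> X (m + 1)"
proof -
  have "A u - scale (theta m) u \<in> sum_over Vss d {int d - (m + 1)..}"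
    using u unfolding X_def by (intro tridiagonal_sum_over_Vss[where I = "{int d - m..}"]) auto
  moreover have "A u - scale (theta m) u \<in> sum_over Vs d ({m..} - {m})"
    using u unfolding X_def by (intro eigen_sum_over_Vs) auto
  moreover have "{m..} - {m} = {m + 1..}"
    by auto
  ultimately show ?thesis
    by (simp add: X_def)
qed

lemma As_X: assumes u: "u \<in> X m" shows "As u - scale (ast * kappa m) u \<in> X (m - 1)"
proof -
  have "As u - scale (dual_theta (int d - m)) u \<in> sum_over Vss d ({int d - m..} - {int d - m})"
    using u unfolding X_def by (intro eigen_sum_over_Vss) auto
  moreover have "As u - scale (ast * kappa m) u \<in> sum_over Vs d {m - 1..}"
    using u unfolding X_def by (intro tridiagonal_sum_over_Vs[where I = "{m..}"]) auto
  moreover have "{int d - m..} - {int d - m} = {int d - (m - 1)..}"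
    by auto
  ultimately show ?thesis
    by (simp add: X_def dual_theta_def kappa_reflect)
qed

lemma qcommutator_A_B:
  "scale q (A (B v)) - scale (inverse q) (B (A v)) = scale ((q - inverse q) * (b * a)) v"
proof (rule qcommutator_shift_diag[where U = W and \<delta> = "\<lambda>m. b * kappa m"
      and \<tau> = "\<lambda>m. a * inverse (kappa m)" and s = 1, OF decomposition_W linB linA B_W A_W])
  show "inverse q * (b * kappa (m + 1)) = q * (b * kappa m)" for m
    using q_nz by (simp add: kappa_succ, simp add: power2_eq_square field_simps)
  show "b * kappa m * (a * inverse (kappa m)) = b * a" for m
    by (simp add: field_simps)
qed

lemma qcommutator_B_As:
  "scale q (B (As v)) - scale (inverse q) (As (B v)) = scale ((q - inverse q) * (b * ast)) v"
proof (rule qcommutator_diag_shift[where U = W and \<delta> = "\<lambda>m. b * kappa m"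
      and \<tau> = dual_theta and s = "-1", OF decomposition_W linB linAs B_W])
  show "As u - scale (dual_theta m) u \<in> W (m + - 1)" if "u \<in> W m" for m u
    using As_W[OF that] by simp
  show "q * (b * kappa (m + - 1)) = inverse q * (b * kappa m)" for m
    using q_nz by (simp add: kappa_pred, simp add: power2_eq_square field_simps)
  show "b * kappa m * dual_theta m = b * ast" for m
    by (simp add: dual_theta_def field_simps)
qed

lemma qcommutator_Bs_A:
  "scale q (Bs (A v)) - scale (inverse q) (A (Bs v)) = scale ((q - inverse q) * (bs * a)) v"
proof (rule qcommutator_diag_shift[where U = X and \<delta> = "\<lambda>m. bs * inverse (kappa m)"
      and \<tau> = theta and s = 1, OF decomposition_X linBs linA Bs_X A_X])
  show "q * (bs * inverse (kappa (m + 1))) = inverse q * (bs * inverse (kappa m))" for m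
    using q_nz by (simp add: kappa_succ, simp add: power2_eq_square field_simps)
  show "bs * inverse (kappa m) * theta m = bs * a" for m
    by (simp add: theta_def field_simps)
qed

lemma qcommutator_As_Bs:
  "scale q (As (Bs v)) - scale (inverse q) (Bs (As v)) = scale ((q - inverse q) * (bs * ast)) v"
proof (rule qcommutator_shift_diag[where U = X and \<delta> = "\<lambda>m. bs * inverse (kappa m)"
      and \<tau> = "\<lambda>m. ast * kappa m" and s = "-1", OF decomposition_X linBs linAs Bs_X])
  show "As u - scale (ast * kappa m) u \<in> X (m + - 1)" if "u \<in> X m" for m u
    using As_X[OF that] by simp
  show "inverse q * (bs * inverse (kappa (m + - 1))) = q * (bs * inverse (kappa m))" for m
    using q_nz by (simp add: kappa_pred, simp add: power2_eq_square field_simps)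
  show "bs * inverse (kappa m) * (ast * kappa m) = bs * ast" for m
    by (simp add: field_simps)
qed

lemma eigenvector_adjacent_Vs:
  "j \<le> d \<Longrightarrow> v \<in> Vs j \<Longrightarrow> int j \<noteq> k \<Longrightarrow> A y - scale (theta k) y = scale \<gamma> v \<Longrightarrow>
    y - scale (\<gamma> / (theta (int j) - theta k)) v \<in> sum_over Vs d {k}"
  by (rule eigenvector_adjacent[OF linA _ inj_theta set_sum_Vs]) (simp_all add: Vs_eigensp)

lemma eigenvector_adjacent_Vss:
  "j \<le> d \<Longrightarrow> v \<in> Vss j \<Longrightarrow> int j \<noteq> k \<Longrightarrow> As y - scale (dual_theta k) y = scale \<gamma> v \<Longrightarrow>
    y - scale (\<gamma> / (dual_theta (int j) - dual_theta k)) v \<in> sum_over Vss d {k}"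
  by (rule eigenvector_adjacent[OF linAs _ inj_dual_theta set_sum_Vss]) (simp_all add: Vss_eigensp)

lemma B_Vs:
  assumes j: "j \<le> d" and v: "v \<in> Vs j"
  shows "B v \<in> sum_over Vs d {int j - 1..}"
proof -
  have Av: "A v = scale (theta (int j)) v"
    using v Vs_eigensp[OF j] by (simp add: eigensp_def)
  have "A (B v) - scale (theta (int j - 1)) (B v)
      = scale (inverse q) (scale q (A (B v)) - scale (inverse q) (B (A v)))"
    using q_nz by (simp add: Av linear_scale[OF linB] theta_pred scale_right_diff_distrib)
  also have "\<dots> = scale (inverse q * ((q - inverse q) * (b * a))) v"
    by (simp add: qcommutator_A_B)
  finally have "A (B v) - scale (theta (int j - 1)) (B v)
      = scale (inverse q * ((q - inverse q) * (b * a))) v" .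
  from eigenvector_adjacent_Vs[OF j v _ this]
  have "\<exists>c. B v - scale c v \<in> sum_over Vs d {int j - 1}"
    by auto
  then obtain c where "B v - scale c v \<in> sum_over Vs d {int j - 1..}"
    using sum_over_mono[of d Vs "{int j - 1}" "{int j - 1..}", OF subspace_Vs] by auto
  moreover have "v \<in> sum_over Vs d {int j - 1..}"
    using subset_sum_over[of d Vs j "{int j - 1..}", OF subspace_Vs j] v by auto
  ultimately have "(B v - scale c v) + scale c v \<in> sum_over Vs d {int j - 1..}"
    by (intro subspace_add subspace_scale subspace_sum_over_Vs)
  then show ?thesis
    by simp
qed

lemma B_Vss:
  assumes j: "j \<le> d" and v: "v \<in> Vss j"
  shows "B v - scale (b * kappa (int j)) v \<in> sum_over Vss d {int j - 1}"
proof -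
  have Asv: "As v = scale (dual_theta (int j)) v"
    using v Vss_eigensp[OF j] by (simp add: eigensp_def)
  have "As (B v) - scale (dual_theta (int j - 1)) (B v)
      = scale (- q) (scale q (B (As v)) - scale (inverse q) (As (B v)))"
    using q_nz by (simp add: Asv linear_scale[OF linB] dual_theta_pred scale_right_diff_distrib)
  also have "\<dots> = scale ((1 - q\<^sup>2) * (b * ast)) v"
    unfolding qcommutator_B_As scale_scale using q_nz
    by (intro arg_cong[where f = "\<lambda>c. scale c v"]) (simp add: field_simps power2_eq_square)
  finally have adjacent:
    "B v - scale ((1 - q\<^sup>2) * (b * ast) / (dual_theta (int j) - dual_theta (int j - 1))) v
      \<in> sum_over Vss d {int j - 1}"
    by (intro eigenvector_adjacent_Vss[OF j v]) simp_all
  have gap: "dual_theta (int j) - dual_theta (int j - 1) = ast * (1 - q\<^sup>2) / kappa (int j)"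
    unfolding dual_theta_pred by (simp add: dual_theta_def field_simps power2_eq_square)
  have "(1 - q\<^sup>2) * (b * ast) / (dual_theta (int j) - dual_theta (int j - 1)) = b * kappa (int j)"
    unfolding gap using ast_nz one_minus_q_square_nonzero by (simp add: field_simps)
  with adjacent show ?thesis
    by simp
qed

lemma Bs_Vs:
  assumes j: "j \<le> d" and v: "v \<in> Vs j"
  shows "Bs v - scale (bs * inverse (kappa (int j))) v \<in> sum_over Vs d {int j + 1}"
proof -
  have Av: "A v = scale (theta (int j)) v"
    using v Vs_eigensp[OF j] by (simp add: eigensp_def)
  have "A (Bs v) - scale (theta (int j + 1)) (Bs v)
      = scale (- q) (scale q (Bs (A v)) - scale (inverse q) (A (Bs v)))"
    using q_nz by (simp add: Av linear_scale[OF linBs] theta_succ scale_right_diff_distrib)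
  also have "\<dots> = scale ((1 - q\<^sup>2) * (bs * a)) v"
    unfolding qcommutator_Bs_A scale_scale using q_nz
    by (intro arg_cong[where f = "\<lambda>c. scale c v"]) (simp add: field_simps power2_eq_square)
  finally have adjacent:
    "Bs v - scale ((1 - q\<^sup>2) * (bs * a) / (theta (int j) - theta (int j + 1))) v
      \<in> sum_over Vs d {int j + 1}"
    by (intro eigenvector_adjacent_Vs[OF j v]) simp_all
  have gap: "theta (int j) - theta (int j + 1) = a * (1 - q\<^sup>2) * kappa (int j)"
    unfolding theta_succ by (simp add: theta_def field_simps power2_eq_square)
  have "(1 - q\<^sup>2) * (bs * a) / (theta (int j) - theta (int j + 1)) = bs * inverse (kappa (int j))"
    unfolding gap using a_nz one_minus_q_square_nonzero by (simp add: field_simps)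
  with adjacent show ?thesis
    by simp
qed

lemma Bs_Vss:
  assumes j: "j \<le> d" and v: "v \<in> Vss j"
  shows "Bs v \<in> sum_over Vss d {..int j + 1}"
proof -
  have Asv: "As v = scale (dual_theta (int j)) v"
    using v Vss_eigensp[OF j] by (simp add: eigensp_def)
  have "As (Bs v) - scale (dual_theta (int j + 1)) (Bs v)
      = scale (inverse q) (scale q (As (Bs v)) - scale (inverse q) (Bs (As v)))"
    using q_nz by (simp add: Asv linear_scale[OF linBs] dual_theta_succ scale_right_diff_distrib)
  also have "\<dots> = scale (inverse q * ((q - inverse q) * (bs * ast))) v"
    by (simp add: qcommutator_As_Bs)
  finally have "As (Bs v) - scale (dual_theta (int j + 1)) (Bs v)
      = scale (inverse q * ((q - inverse q) * (bs * ast))) v" .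
  from eigenvector_adjacent_Vss[OF j v _ this]
  have "\<exists>c. Bs v - scale c v \<in> sum_over Vss d {int j + 1}"
    by auto
  then obtain c where "Bs v - scale c v \<in> sum_over Vss d {..int j + 1}"
    using sum_over_mono[of d Vss "{int j + 1}" "{..int j + 1}", OF subspace_Vss] by auto
  moreover have "v \<in> sum_over Vss d {..int j + 1}"
    using subset_sum_over[of d Vss j "{..int j + 1}", OF subspace_Vss j] v by auto
  ultimately have "(Bs v - scale c v) + scale c v \<in> sum_over Vss d {..int j + 1}"
    by (intro subspace_add subspace_scale subspace_sum_over_Vss)
  then show ?thesis
    by simp
qed

lemma B_U: assumes u: "u \<in> U m" shows "B u - scale (b * kappa m) u \<in> U (m - 1)"
proof -
  have "B u - scale (b * kappa m) u \<in> sum_over Vss d {..m - 1}"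
  proof (rule sum_over_map_diag[where \<mu> = "\<lambda>m. b * kappa m", OF linB subspace_sum_over_Vss])
    show "B y - scale (b * kappa (int h)) y \<in> sum_over Vss d {..m - 1}"
      if "h \<le> d" "int h \<in> {..m}" "y \<in> Vss h" for h y
      using B_Vss[OF that(1,3)] that(2)
        sum_over_mono[of d Vss "{int h - 1}" "{..m - 1}", OF subspace_Vss]
      by auto
    show "Vss h \<subseteq> sum_over Vss d {..m - 1}" if "h \<le> d" "int h \<in> {..m} - {m}" for h
      using that by (intro subset_sum_over[of d Vss, OF subspace_Vss]) auto
    show "u \<in> sum_over Vss d {..m}"
      using u by (simp add: U_def)
  qed
  moreover have "B u - scale (b * kappa m) u \<in> sum_over Vs d {m - 1..}"
  proof (rule sum_over_map[OF linB subspace_sum_over_Vs])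
    show "B y - scale (b * kappa m) y \<in> sum_over Vs d {m - 1..}"
      if "h \<le> d" "int h \<in> {m..}" "y \<in> Vs h" for h y
    proof -
      have "sum_over Vs d {int h - 1..} \<subseteq> sum_over Vs d {m - 1..}"
        using that(2) by (intro sum_over_mono[of d Vs, OF subspace_Vs]) auto
      moreover have "Vs h \<subseteq> sum_over Vs d {m - 1..}"
        using that(1,2) by (intro subset_sum_over[of d Vs, OF subspace_Vs]) auto
      ultimately show ?thesis
        using B_Vs[OF that(1,3)] that(3)
        by (blast intro: subspace_diff subspace_scale subspace_sum_over_Vs)
    qed
    show "u \<in> sum_over Vs d {m..}"
      using u by (simp add: U_def)
  qed
  ultimately show ?thesis
    by (simp add: U_def)
qed

lemma Bs_U: assumes u: "u \<in> U m" shows "Bs u - scale (bs * inverse (kappa m)) u \<in> U (m + 1)"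
proof -
  have "Bs u - scale (bs * inverse (kappa m)) u \<in> sum_over Vss d {..m + 1}"
  proof (rule sum_over_map[OF linBs subspace_sum_over_Vss])
    show "Bs y - scale (bs * inverse (kappa m)) y \<in> sum_over Vss d {..m + 1}"
      if "h \<le> d" "int h \<in> {..m}" "y \<in> Vss h" for h y
    proof -
      have "sum_over Vss d {..int h + 1} \<subseteq> sum_over Vss d {..m + 1}"
        using that(2) by (intro sum_over_mono[of d Vss, OF subspace_Vss]) auto
      moreover have "Vss h \<subseteq> sum_over Vss d {..m + 1}"
        using that(1,2) by (intro subset_sum_over[of d Vss, OF subspace_Vss]) auto
      ultimately show ?thesis
        using Bs_Vss[OF that(1,3)] that(3)
        by (blast intro: subspace_diff subspace_scale subspace_sum_over_Vss)
    qed
    show "u \<in> sum_over Vss d {..m}"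
      using u by (simp add: U_def)
  qed
  moreover have "Bs u - scale (bs * inverse (kappa m)) u \<in> sum_over Vs d {m + 1..}"
  proof (rule sum_over_map_diag[where \<mu> = "\<lambda>m. bs * inverse (kappa m)",
        OF linBs subspace_sum_over_Vs])
    show "Bs y - scale (bs * inverse (kappa (int h))) y \<in> sum_over Vs d {m + 1..}"
      if "h \<le> d" "int h \<in> {m..}" "y \<in> Vs h" for h y
      using Bs_Vs[OF that(1,3)] that(2)
        sum_over_mono[of d Vs "{int h + 1}" "{m + 1..}", OF subspace_Vs]
      by auto
    show "Vs h \<subseteq> sum_over Vs d {m + 1..}" if "h \<le> d" "int h \<in> {m..} - {m}" for h
      using that by (intro subset_sum_over[of d Vs, OF subspace_Vs]) auto
    show "u \<in> sum_over Vs d {m..}"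
      using u by (simp add: U_def)
  qed
  ultimately show ?thesis
    by (simp add: U_def)
qed

lemma bij_K: "bij K"
  by (rule bij_if_scalar_on_decomposition[where \<kappa> = "\<lambda>i. kappa (int i)",
        OF decomposition_U linK]) (auto intro: K_U)

lemma linear_inv_K: "Vector_Spaces.linear scale scale (inv K)"
  using bij_module_hom_imp_inv_module_hom[of scale scale K] linK bij_K
  by (simp add: module_hom_iff_linear)

lemma inv_K_U: assumes u: "u \<in> U m" shows "inv K u = scale (inverse (kappa m)) u"
proof -
  have "K (scale (inverse (kappa m)) u) = u"
    using K_U[OF subspace_scale[OF subspace_U u]] by simp
  then show ?thesis
    using bij_is_inj[OF bij_K] inv_f_f by metis
qed

lemma qcommutator_inv_K_A:
  "scale q (inv K (A v)) - scale (inverse q) (A (inv K v)) = scale ((q - inverse q) * a) v"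
proof (rule qcommutator_diag_shift[where U = U and \<delta> = "\<lambda>m. inverse (kappa m)" and \<tau> = theta
      and s = 1, OF decomposition_U linear_inv_K linA inv_K_U A_U])
  show "q * inverse (kappa (m + 1)) = inverse q * inverse (kappa m)" for m
    using q_nz by (simp add: kappa_succ, simp add: field_simps power2_eq_square)
  show "inverse (kappa m) * theta m = a" for m
    by (simp add: theta_def)
qed

lemma qcommutator_B_inv_K:
  "scale q (B (inv K v)) - scale (inverse q) (inv K (B v)) = scale ((q - inverse q) * b) v"
proof (rule qcommutator_shift_diag[where U = U and \<delta> = "\<lambda>m. inverse (kappa m)"
      and \<tau> = "\<lambda>m. b * kappa m" and s = "-1", OF decomposition_U linear_inv_K linB inv_K_U])
  show "B u - scale (b * kappa m) u \<in> U (m + - 1)" if "u \<in> U m" for m u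
    using B_U[OF that] by simp
  show "inverse q * inverse (kappa (m + - 1)) = q * inverse (kappa m)" for m
    using q_nz by (simp add: kappa_pred, simp add: field_simps power2_eq_square)
  show "inverse (kappa m) * (b * kappa m) = b" for m
    by simp
qed

lemma qcommutator_K_As:
  "scale q (K (As v)) - scale (inverse q) (As (K v)) = scale ((q - inverse q) * ast) v"
proof (rule qcommutator_diag_shift[where U = U and \<delta> = kappa and \<tau> = dual_theta and s = "-1",
      OF decomposition_U linK linAs K_U])
  show "As u - scale (dual_theta m) u \<in> U (m + - 1)" if "u \<in> U m" for m u
    using As_U[OF that] by simp
  show "q * kappa (m + - 1) = inverse q * kappa m" for m
    using q_nz by (simp add: kappa_pred, simp add: field_simps power2_eq_square)
  show "kappa m * dual_theta m = ast" for m
    by (simp add: dual_theta_def)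
qed

lemma qcommutator_Bs_K:
  "scale q (Bs (K v)) - scale (inverse q) (K (Bs v)) = scale ((q - inverse q) * bs) v"
proof (rule qcommutator_shift_diag[where U = U and \<delta> = kappa
      and \<tau> = "\<lambda>m. bs * inverse (kappa m)" and s = 1, OF decomposition_U linK linBs K_U Bs_U])
  show "inverse q * kappa (m + 1) = q * kappa m" for m
    using q_nz by (simp add: kappa_succ, simp add: field_simps power2_eq_square)
  show "kappa m * (bs * inverse (kappa m)) = bs" for m
    by simp
qed

end

theorem theorem10p1:
  fixes scale :: "'k::alg_closed_field \<Rightarrow> 'v::ab_group_add \<Rightarrow> 'v"
    and A As B Bs K :: "'v \<Rightarrow> 'v"
    and Vs Vss :: "nat \<Rightarrow> 'v set"
    and d :: nat and q a ast b bs :: 'k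
  assumes vs: "vector_space scale"
    and findim: "\<exists>S. finite S \<and> module.span scale S = UNIV"
    and nonzero: "(UNIV :: 'v set) \<noteq> {0}"
    and q_nz: "q \<noteq> 0"
    and q_nonroot: "\<forall>n::nat. n > 0 \<longrightarrow> q ^ n \<noteq> 1"
    and tdp: "tridiagonal_pair scale A As"
    and std: "standard_ordering scale A As Vs d"
    and stds: "standard_ordering scale As A Vss d"
    and eigA: "\<forall>i\<le>d. Vs i = eigensp scale A (a * q powi (2 * int i - int d))"
    and eigAs: "\<forall>i\<le>d. Vss i = eigensp scale As (ast * q powi (int d - 2 * int i))"
    and a_nz: "a \<noteq> 0" and ast_nz: "ast \<noteq> 0" and b_nz: "b \<noteq> 0" and bs_nz: "bs \<noteq> 0"
    and dec1: "is_decomposition scale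
                 (\<lambda>i. (\<Sum>h\<le>i. Vss h) \<inter> (\<Sum>h\<le>d - i. Vs h)) d"
    and dec2: "is_decomposition scale
                 (\<lambda>i. (\<Sum>h\<in>{d - i..d}. Vss h) \<inter> (\<Sum>h\<in>{i..d}. Vs h)) d"
    and dec3: "is_decomposition scale
                 (\<lambda>i. (\<Sum>h\<le>i. Vss h) \<inter> (\<Sum>h\<in>{i..d}. Vs h)) d"
    and B_lin: "Vector_Spaces.linear scale scale B"
    and B_def: "\<forall>i\<le>d. \<forall>v \<in> (\<Sum>h\<le>i. Vss h) \<inter> (\<Sum>h\<le>d - i. Vs h).
                   B v = scale (b * q powi (2 * int i - int d)) v"
    and Bs_lin: "Vector_Spaces.linear scale scale Bs"
    and Bs_def: "\<forall>i\<le>d. \<forall>v \<in> (\<Sum>h\<in>{d - i..d}. Vss h) \<inter> (\<Sum>h\<in>{i..d}. Vs h).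
                   Bs v = scale (bs * q powi (int d - 2 * int i)) v"
    and K_lin: "Vector_Spaces.linear scale scale K"
    and K_def: "\<forall>i\<le>d. \<forall>v \<in> (\<Sum>h\<le>i. Vss h) \<inter> (\<Sum>h\<in>{i..d}. Vs h).
                   K v = scale (q powi (2 * int i - int d)) v"
  shows "(\<lambda>v. scale (inverse (q - inverse q))
            (scale q (inv K (A v)) - scale (inverse q) (A (inv K v)))) = (\<lambda>v. scale a v) \<and>
    (\<lambda>v. scale (inverse (q - inverse q))
            (scale q (B (inv K v)) - scale (inverse q) (inv K (B v)))) = (\<lambda>v. scale b v) \<and>
    (\<lambda>v. scale (inverse (q - inverse q))
            (scale q (K (As v)) - scale (inverse q) (As (K v)))) = (\<lambda>v. scale ast v) \<and>
    (\<lambda>v. scale (inverse (q - inverse q))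
            (scale q (Bs (K v)) - scale (inverse q) (K (Bs v)))) = (\<lambda>v. scale bs v)"
proof -
  have linA: "Vector_Spaces.linear scale scale A" and linAs: "Vector_Spaces.linear scale scale As"
    and diagA: "diagonalizable scale A" and diagAs: "diagonalizable scale As"
    using tdp by (simp_all add: tridiagonal_pair_def)
  interpret q_geometric_tdp scale A As B Bs K Vs Vss d q a ast b bs
    by (rule q_geometric_tdp.intro[OF vs q_geometric_tdp_axioms.intro[OF q_nz q_nonroot a_nz
          ast_nz linA linAs diagA diagAs std stds eigA eigAs dec1 dec2 dec3 B_lin B_def Bs_lin
          Bs_def K_lin K_def]])
  show ?thesis
    by (intro conjI ext;
        unfold qcommutator_inv_K_A qcommutator_B_inv_K qcommutator_K_As qcommutator_Bs_K)
      (simp_all add: left_inverse[OF q_minus_inverse_nonzero])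
qed

end
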